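(* Let $H$ be a group of isometries of $\mathcal{C}_k$ (generated by Euclidean isometries, phases and the rotation map) which contains the circle translation $S_\varphi$. Then $\mathcal{C}_k(H)\neq\emptyset$ only if $\varphi=2r\pi/k$ for some $r\in\mathbb{Z}$.
   Context: Fix $\mu_0>0$, $S^1=\mathbb{R}/\frac{2\pi}{\mu_0}\mathbb{Z}$. $\mathcal{C}_k$ is the moduli space of framed $SU(2)$ calorons on $S^1\times\mathbb{R}^3$ (finite-action anti-self-dual $SU(2)$ connections with the standard caloron boundary conditions) with monopole charges $(k,k)$ and equal monopole masses $\mu_0/2$, modulo gauge transformations equal to the identity at spatial infinity. $S_\varphi$ is the rotation of the circle factor by angle $\varphi$ (i.e. $t\mapsto t+\varphi/\mu_0$), acting on calorons by pullback. $\mathcal{C}_k(H)$ is the set of $[A]\in\mathcal{C}_k$ with $[h\cdot A]=[A]$ for all $h\in H$. Known correspondence (Charbonneau–Hurtubise): $\mathcal{C}_k$ is biholomorphic to the moduli space of non-singular monad matrices $(A,B,C,D)$ ($A,B\in Mat_{k\times k}(\mathbb{C})$, $A$ invertible, $C\in Mat_{k\times 2}$, $D\in Mat_{2\times k}$, $[A,B]+CD=0$ plus full-rank conditions, modulo simultaneous $GL(k,\mathbb{C})$ conjugation $(gAg^{-1},gBg^{-1},gC,Dg^{-1})$), under which $S_\varphi$ acts by $(A,B,C,D)\mapsto(e^{-i\varphi}A,B,C\,\mathrm{adj}(\sigma_\varphi),\sigma_\varphi D)$ with $\sigma_\varphi=\mathrm{diag}(e^{-3i\varphi/4},e^{-i\varphi/4})$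 and $\mathrm{adj}(\sigma)=\det(\sigma)\sigma^{-1}$. *)

theory Defs
  imports "HOL-Analysis.Analysis"
begin

type_synonym 'k monad =
  "(complex^'k^'k) \<times> (complex^'k^'k) \<times> (complex^2^'k) \<times> (complex^'k^2)"

definition nonsingular_monad :: "'k::finite monad \<Rightarrow> bool" where
  "nonsingular_monad m \<longleftrightarrow> (case m of (A, B, C, D) \<Rightarrow>
     invertible A \<and>
     A ** B - B ** A + C ** D = 0 \<and>
     (\<forall>z w v. (A - mat z) *v v = 0 \<and> (B - mat w) *v v = 0 \<and> D *v v = 0 \<longrightarrow> v = 0) \<and>
     (\<forall>z w u. \<exists>x y s. - ((B - mat w) *v x) + (A - mat z) *v y + C *v s = u))"

definition monad_equiv :: "'k::finite monad \<Rightarrow> 'k monad \<Rightarrow> bool" where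
  "monad_equiv m m' \<longleftrightarrow> (case m of (A, B, C, D) \<Rightarrow>
     (\<exists>g :: complex^'k^'k. invertible g \<and>
        m' = (g ** A ** matrix_inv g, g ** B ** matrix_inv g, g ** C, D ** matrix_inv g)))"

definition monad_rel :: "('k::finite monad \<times> 'k monad) set" where
  "monad_rel = {(m, m'). nonsingular_monad m \<and> nonsingular_monad m' \<and> monad_equiv m m'}"

text \<open>The caloron moduli space C_k, realised (Charbonneau--Hurtubise) as the set of
  GL(k,C)-orbits of non-singular monads.\<close>
definition caloron_moduli :: "'k::finite monad set set" where
  "caloron_moduli = {m. nonsingular_monad m} // monad_rel"

definition sigma_mat :: "real \<Rightarrow> complex^2^2" where
  "sigma_mat \<phi> = (\<chi> i j. if i = j then (if i = 1 then exp (- 3 * \<i> * of_real \<phi> / 4)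
                                              else exp (- \<i> * of_real \<phi> / 4)) else 0)"

definition adj2 :: "complex^2^2 \<Rightarrow> complex^2^2" where
  "adj2 \<sigma> = (\<chi> i j. det \<sigma> * matrix_inv \<sigma> $ i $ j)"

definition S_act :: "real \<Rightarrow> 'k::finite monad \<Rightarrow> 'k monad" where
  "S_act \<phi> m = (case m of (A, B, C, D) \<Rightarrow>
     (mat (exp (- \<i> * of_real \<phi>)) ** A, B, C ** adj2 (sigma_mat \<phi>), sigma_mat \<phi> ** D))"

definition S_cls :: "real \<Rightarrow> 'k::finite monad set \<Rightarrow> 'k monad set" where
  "S_cls \<phi> X = monad_rel `` (S_act \<phi> ` X)"

definition fixed_classes :: "('k::finite monad set \<Rightarrow> 'k monad set) set \<Rightarrow> 'k monad set set" where
  "fixed_classes H = {X \<in> caloron_moduli. \<forall>h\<in>H. h X = X}"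

end

theory Submission
  imports Defs
begin

text \<open>The determinant of \<open>A\<close> is invariant under the \<open>GL(k,\<complex>)\<close>-action and non-zero on
  non-singular monads, while \<open>S\<^sub>\<phi>\<close> multiplies it by \<open>exp(-i\<phi>)^k\<close>. On an orbit fixed by
  \<open>S\<^sub>\<phi>\<close> this forces \<open>exp(-ik\<phi>) = 1\<close>, i.e. \<open>k\<phi> \<in> 2\<pi>\<int>\<close>.\<close>

lemma matrix_mul_matrix_inv_right:
  fixes g :: "'a::semiring_1^'n^'n"
  assumes "invertible g"
  shows "g ** matrix_inv g = mat 1"
proof -
  have "\<exists>g'. g ** g' = mat 1 \<and> g' ** g = mat 1"
    using assms unfolding invertible_def by blast
  then show ?thesis
    unfolding matrix_inv_def by (rule someI2_ex) blast
qed

lemma matrix_inv_mat_1: "matrix_inv (mat 1 :: 'a::semiring_1^'n^'n) = mat 1"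
proof -
  have "invertible (mat 1 :: 'a^'n^'n)"
    unfolding invertible_def by (rule exI[of _ "mat 1"]) simp
  then show ?thesis
    using matrix_mul_matrix_inv_right by (metis matrix_mul_lid)
qed

lemma det_conjugate:
  fixes g M :: "'a::comm_ring_1^'n^'n"
  assumes "invertible g"
  shows "det (g ** M ** matrix_inv g) = det M"
proof -
  have "det (g ** M ** matrix_inv g) = det M * det (g ** matrix_inv g)"
    by (simp add: det_mul)
  also have "\<dots> = det M"
    using matrix_mul_matrix_inv_right[OF assms] by simp
  finally show ?thesis .
qed

lemma det_mat: "det (mat c :: 'a::comm_ring_1^'n^'n) = c ^ CARD('n)"
  by (subst det_diagonal) (simp_all add: mat_def)

lemma monad_equiv_det:
  assumes "monad_equiv m m'"
  shows "det (fst m') = det (fst m)"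
  using assms det_conjugate unfolding monad_equiv_def by (auto split: prod.splits)

lemma monad_rel_refl:
  assumes "nonsingular_monad m"
  shows "(m, m) \<in> monad_rel"
proof -
  have "monad_equiv m m"
    unfolding monad_equiv_def
    by (auto split: prod.splits intro!: exI[of _ "mat 1"]
             simp: invertible_def matrix_inv_mat_1 matrix_mul_lid matrix_mul_rid)
  then show ?thesis
    using assms unfolding monad_rel_def by simp
qed

lemma nonsingular_monad_det_nz:
  assumes "nonsingular_monad m"
  shows "det (fst m) \<noteq> 0"
  using assms unfolding nonsingular_monad_def
  by (auto split: prod.splits simp: invertible_det_nz)

lemma det_fst_S_act:
  "det (fst (S_act \<phi> m)) = exp (- \<i> * of_real \<phi>) ^ CARD('k) * det (fst (m :: 'k::finite monad))"
  unfolding S_act_def by (simp split: prod.splits add: det_mul det_mat)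

lemma S_cls_fixed_root_of_unity:
  fixes X :: "'k::finite monad set"
  assumes "X \<in> caloron_moduli" and "S_cls \<phi> X = X"
  shows "exp (- \<i> * of_real \<phi>) ^ CARD('k) = 1"
proof -
  obtain m where m: "nonsingular_monad m" "X = monad_rel `` {m}"
    using assms(1) unfolding caloron_moduli_def quotient_def by blast
  then have "m \<in> X"
    using monad_rel_refl by simp
  then have "m \<in> S_cls \<phi> X"
    using assms(2) by simp
  then obtain m' where "m' \<in> X" and "(S_act \<phi> m', m) \<in> monad_rel"
    unfolding S_cls_def by blast
  then have equiv_m': "monad_equiv m m'" and equiv_S_act_m': "monad_equiv (S_act \<phi> m') m"
    using m(2) unfolding monad_rel_def by simp_all
  have det_m': "det (fst m') = det (fst m)"
    using equiv_m' by (rule monad_equiv_det)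
  have "det (fst m) = det (fst (S_act \<phi> m'))"
    using equiv_S_act_m' by (rule monad_equiv_det)
  also have "\<dots> = exp (- \<i> * of_real \<phi>) ^ CARD('k) * det (fst m)"
    by (simp add: det_fst_S_act det_m')
  finally show ?thesis
    using nonsingular_monad_det_nz[OF m(1)] by simp
qed

lemma exp_minus_ii_power_eq_1D:
  assumes "n > 0" and "exp (- \<i> * of_real \<phi>) ^ n = 1"
  shows "\<exists>r::int. \<phi> = 2 * of_int r * pi / real n"
proof -
  have "exp (of_nat n * (- \<i> * of_real \<phi>)) = 1"
    using assms(2) by (simp only: exp_of_nat_mult)
  then obtain r :: int where "- (real n * \<phi>) = 2 * of_int r * pi"
    unfolding exp_eq_1 by auto
  then have "\<phi> = 2 * of_int (- r) * pi / real n"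
    using assms(1) by (simp add: field_simps)
  then show ?thesis by blast
qed

theorem mainTheorem4:
  fixes H :: "('k::finite monad set \<Rightarrow> 'k monad set) set" and \<phi> :: real
  assumes "S_cls \<phi> \<in> H"
    and "fixed_classes H \<noteq> {}"
  shows "\<exists>r::int. \<phi> = 2 * of_int r * pi / real CARD('k)"
proof -
  obtain X where "X \<in> fixed_classes H"
    using assms(2) by blast
  then have "X \<in> caloron_moduli" and "S_cls \<phi> X = X"
    using assms(1) unfolding fixed_classes_def by auto
  then have "exp (- \<i> * of_real \<phi>) ^ CARD('k) = 1"
    by (rule S_cls_fixed_root_of_unity)
  then show ?thesis
    by (intro exp_minus_ii_power_eq_1D) simp_all
qed

end
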